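(* Let $0<s<t\le1$, let $\mathbf x_t\in\mathsf X$ with $p_t(\mathbf x_t)>0$, and let $(\mathbf x_s,\mathbf u_s)\in\mathsf X\times\mathsf X$. Then $$\sum_{\mathbf u_t\in\mathsf X}\bar p_{s|t}\big((\mathbf x_s,\mathbf u_s)\mid(\mathbf x_t,\mathbf u_t)\big)\,\rho_t(\mathbf u_t\mid\mathbf x_t)=p_{s|t}(\mathbf x_s\mid\mathbf x_t)\,\rho_s(\mathbf u_s\mid\mathbf x_s).$$ If $p_s(\mathbf x_s)=0$, the right-hand side is interpreted as $0$.
   Context: **UDM setup.** - Let $K\ge2$, $L\ge1$ and $\mathsf V=\{1,\dots,K\}$. Tokens are identified with the standard basis vectors of $\mathbb R^K$, and $\mathbf 1$ is the all-ones vector. - $\mathsf X=\mathsf V^L$, with $\mathbf x^\ell$ the $\ell$-th token. $p_0$ is a distribution on $\mathsf X$. - The schedule $\alpha:[0,1]\to[0,1]$ is strictly decreasing, with $\alpha_0=1$ and $\alpha_t\in(0,1)$ for $t\in(0,1]$. Set $\alpha_{t|s}=\alpha_t/\alpha_s$. - The UDM forward kernel is $q_{t|s}(\mathbf x_t\mid\mathbf x_s)=\prod_\ell\langle\mathbf x_t^\ell,\alpha_{t|s}\mathbf x_s^\ell+(1-\alpha_{t|s})\mathbf 1/K\rangle$. - $p_t(\mathbf x)=\sum_{\mathbf x_0}p_0(\mathbf x_0)q_{t|0}(\mathbf x\mid\mathbf x_0)$. - UDM reverse kernel: $p_{s|t}(\mathbf x_s\mid\mathbf x_t)=p_s(\mathbf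 x_s)q_{t|s}(\mathbf x_t\mid\mathbf x_s)/p_t(\mathbf x_t)$. - UDM bridge: $q_{s|0,t}(\mathbf x_s\mid\mathbf x_0,\mathbf x_t)=q_{t|s}(\mathbf x_t\mid\mathbf x_s)q_{s|0}(\mathbf x_s\mid\mathbf x_0)/q_{t|0}(\mathbf x_t\mid\mathbf x_0)$. **Absorbing lifting.** - For $\mathbf u\in\mathsf X$, define $q_{t|0}(\mathbf x_t\mid\mathbf x_0,\mathbf u)=\prod_\ell\langle\mathbf x_t^\ell,\alpha_t\mathbf x_0^\ell+(1-\alpha_t)\mathbf u^\ell\rangle$. - $p_t(\mathbf x\mid\mathbf u)=\sum_{\mathbf x_0}p_0(\mathbf x_0)q_{t|0}(\mathbf x\mid\mathbf x_0,\mathbf u)$. - Noise-conditioned denoiser: $p_{0|t}(\mathbf x_0\mid\mathbf x_t,\mathbf u)=p_0(\mathbf x_0)q_{t|0}(\mathbf x_t\mid\mathbf x_0,\mathbf u)/p_t(\mathbf x_t\mid\mathbf u)$, defined when $p_t(\mathbf x_t\mid\mathbf u)>0$. - $\rho_t(\mathbf u\mid\mathbf x_t):=K^{-L}p_t(\mathbf x_t\mid\mathbf u)/p_t(\mathbf x_t)$. This is the posterior of $\mathbf u$ under a uniform prior on $\mathsf X$. **Resampling law.** - $r_s(\mathbf u_s\mid\mathbf x_0,\mathbf x_s):=K^{-L}q_{s|0}(\mathbf x_s\mid\mathbf x_0,\mathbf u_s)/q_{s|0}(\mathbf x_s\mid\mathbf x_0)$. - Explicitly, it is the product over $\ell$ of: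 $\mathrm{Cat}(\mathbf u_s^\ell;\mathbf x_s^\ell)$ if $\mathbf x_s^\ell\ne\mathbf x_0^\ell$, and $\mathrm{Cat}\big(\mathbf u_s^\ell;\frac{\alpha_s\mathbf 1+(1-\alpha_s)\mathbf x_0^\ell}{1+(K-1)\alpha_s}\big)$ if $\mathbf x_s^\ell=\mathbf x_0^\ell$. **Lifted kernel.** $$\bar p_{s|t}((\mathbf x_s,\mathbf u_s)\mid(\mathbf x_t,\mathbf u_t)):=\sum_{\mathbf x_0}r_s(\mathbf u_s\mid\mathbf x_0,\mathbf x_s)\,q_{s|0,t}(\mathbf x_s\mid\mathbf x_0,\mathbf x_t)\,p_{0|t}(\mathbf x_0\mid\mathbf x_t,\mathbf u_t).$$ *)

theory Defs
  imports "HOL-Analysis.Analysis"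
begin

text \<open>Tokens: elements of a finite type 'v (K = CARD('v)); positions: a finite type 'l
  (L = CARD('l)); sequences X = V^L are functions 'l \<Rightarrow> 'v.
  The inner product of two one-hot vectors is the indicator of equality, and
  the inner product of a one-hot vector with 1/K is 1/K.\<close>

definition valid_schedule :: "(real \<Rightarrow> real) \<Rightarrow> bool" where
  "valid_schedule \<alpha> \<longleftrightarrow> strict_antimono_on {0..1} \<alpha> \<and> \<alpha> 0 = 1 \<and>
     (\<forall>t\<in>{0<..1}. 0 < \<alpha> t \<and> \<alpha> t < 1)"

definition valid_dist :: "(('l::finite \<Rightarrow> 'v::finite) \<Rightarrow> real) \<Rightarrow> bool" where
  "valid_dist p \<longleftrightarrow> (\<forall>x. 0 \<le> p x) \<and> (\<Sum>x\<in>UNIV. p x) = 1"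

definition qf :: "(real \<Rightarrow> real) \<Rightarrow> real \<Rightarrow> real \<Rightarrow> ('l::finite \<Rightarrow> 'v::finite) \<Rightarrow> ('l \<Rightarrow> 'v) \<Rightarrow> real" where
  "qf \<alpha> t s xt xs = (\<Prod>l\<in>UNIV. (\<alpha> t / \<alpha> s) * (if xt l = xs l then 1 else 0)
       + (1 - \<alpha> t / \<alpha> s) / real CARD('v))"

definition pt :: "(('l::finite \<Rightarrow> 'v::finite) \<Rightarrow> real) \<Rightarrow> (real \<Rightarrow> real) \<Rightarrow> real \<Rightarrow> ('l \<Rightarrow> 'v) \<Rightarrow> real" where
  "pt p0 \<alpha> t x = (\<Sum>x0\<in>UNIV. p0 x0 * qf \<alpha> t 0 x x0)"

definition prev :: "(('l::finite \<Rightarrow> 'v::finite) \<Rightarrow> real) \<Rightarrow> (real \<Rightarrow> real) \<Rightarrow> real \<Rightarrow> real \<Rightarrow> ('l \<Rightarrow> 'v) \<Rightarrow> ('l \<Rightarrow> 'v) \<Rightarrow> real" where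
  "prev p0 \<alpha> s t xs xt = pt p0 \<alpha> s xs * qf \<alpha> t s xt xs / pt p0 \<alpha> t xt"

definition qbridge :: "(real \<Rightarrow> real) \<Rightarrow> real \<Rightarrow> real \<Rightarrow> ('l::finite \<Rightarrow> 'v::finite) \<Rightarrow> ('l \<Rightarrow> 'v) \<Rightarrow> ('l \<Rightarrow> 'v) \<Rightarrow> real" where
  "qbridge \<alpha> s t xs x0 xt = qf \<alpha> t s xt xs * qf \<alpha> s 0 xs x0 / qf \<alpha> t 0 xt x0"

definition qu :: "(real \<Rightarrow> real) \<Rightarrow> real \<Rightarrow> ('l::finite \<Rightarrow> 'v::finite) \<Rightarrow> ('l \<Rightarrow> 'v) \<Rightarrow> ('l \<Rightarrow> 'v) \<Rightarrow> real" where
  "qu \<alpha> t xt x0 u = (\<Prod>l\<in>UNIV. \<alpha> t * (if xt l = x0 l then 1 else 0)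
       + (1 - \<alpha> t) * (if xt l = u l then 1 else 0))"

definition ptu :: "(('l::finite \<Rightarrow> 'v::finite) \<Rightarrow> real) \<Rightarrow> (real \<Rightarrow> real) \<Rightarrow> real \<Rightarrow> ('l \<Rightarrow> 'v) \<Rightarrow> ('l \<Rightarrow> 'v) \<Rightarrow> real" where
  "ptu p0 \<alpha> t x u = (\<Sum>x0\<in>UNIV. p0 x0 * qu \<alpha> t x x0 u)"

definition pden :: "(('l::finite \<Rightarrow> 'v::finite) \<Rightarrow> real) \<Rightarrow> (real \<Rightarrow> real) \<Rightarrow> real \<Rightarrow> ('l \<Rightarrow> 'v) \<Rightarrow> ('l \<Rightarrow> 'v) \<Rightarrow> ('l \<Rightarrow> 'v) \<Rightarrow> real" where
  "pden p0 \<alpha> t x0 xt u = p0 x0 * qu \<alpha> t xt x0 u / ptu p0 \<alpha> t xt u"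

definition rho :: "(('l::finite \<Rightarrow> 'v::finite) \<Rightarrow> real) \<Rightarrow> (real \<Rightarrow> real) \<Rightarrow> real \<Rightarrow> ('l \<Rightarrow> 'v) \<Rightarrow> ('l \<Rightarrow> 'v) \<Rightarrow> real" where
  "rho p0 \<alpha> t u xt = (1 / real CARD('v)) ^ CARD('l) * ptu p0 \<alpha> t xt u / pt p0 \<alpha> t xt"

definition rres :: "(real \<Rightarrow> real) \<Rightarrow> real \<Rightarrow> ('l::finite \<Rightarrow> 'v::finite) \<Rightarrow> ('l \<Rightarrow> 'v) \<Rightarrow> ('l \<Rightarrow> 'v) \<Rightarrow> real" where
  "rres \<alpha> s us x0 xs = (1 / real CARD('v)) ^ CARD('l) * qu \<alpha> s xs x0 us / qf \<alpha> s 0 xs x0"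

definition plift :: "(('l::finite \<Rightarrow> 'v::finite) \<Rightarrow> real) \<Rightarrow> (real \<Rightarrow> real) \<Rightarrow> real \<Rightarrow> real \<Rightarrow>
    ('l \<Rightarrow> 'v) \<Rightarrow> ('l \<Rightarrow> 'v) \<Rightarrow> ('l \<Rightarrow> 'v) \<Rightarrow> ('l \<Rightarrow> 'v) \<Rightarrow> real" where
  "plift p0 \<alpha> s t xs us xt ut = (\<Sum>x0\<in>UNIV. rres \<alpha> s us x0 xs * qbridge \<alpha> s t xs x0 xt
       * pden p0 \<alpha> t x0 xt ut)"

end

theory Submission
  imports Defs "HOL-Library.FuncSet"
begin

text \<open>Summing over the lifted variable u_t first, the denoiser times the posterior rho_t is the
  joint weight K^{-L} p_0(x_0) q_{t|0}(x_t | x_0, u_t) / p_t(x_t), and averaging the absorbing kernel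
  over a uniform u_t gives back the uniform-noise kernel q_{t|0}(x_t | x_0). What remains is, for each
  x_0, the product r_s q_{s|0,t} p_0 q_{t|0} / p_t, in which the two UDM kernels q_{t|0} and q_{s|0}
  cancel; summing over x_0 produces p_s(x_s | u_s), i.e. the right-hand side. The case distinction
  is void: p_s(x_s) > 0 always, because every q_{s|0}(x_s | x_0) is positive.\<close>

lemma sum_qu_uniform:
  assumes "\<alpha> 0 = 1"
  shows "(1 / real CARD('v)) ^ CARD('l) * (\<Sum>u\<in>UNIV. qu \<alpha> t (x::'l::finite \<Rightarrow> 'v::finite) x0 u)
           = qf \<alpha> t 0 x x0"
proof -
  define a where "a l = \<alpha> t * (if x l = x0 l then 1 else 0)" for l
  have coordinate_sum: "(\<Sum>v\<in>UNIV. a l + (1 - \<alpha> t) * (if x l = v then 1 else 0))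
                          = real CARD('v) * a l + (1 - \<alpha> t)" for l
    by (simp add: sum.distrib flip: sum_distrib_left)
  have "(\<Sum>u\<in>UNIV. qu \<alpha> t x x0 u)
          = (\<Sum>u\<in>PiE UNIV (\<lambda>_. UNIV). \<Prod>l\<in>UNIV. a l + (1 - \<alpha> t) * (if x l = u l then 1 else 0))"
    by (simp add: qu_def a_def)
  also have "\<dots> = (\<Prod>l\<in>UNIV. \<Sum>v\<in>UNIV. a l + (1 - \<alpha> t) * (if x l = v then 1 else 0))"
    by (rule prod_sum_PiE[symmetric]) auto
  also have "\<dots> = (\<Prod>l\<in>UNIV. real CARD('v) * a l + (1 - \<alpha> t))"
    by (simp only: coordinate_sum)
  moreover have "(1 / real CARD('v)) ^ CARD('l) = (\<Prod>l\<in>(UNIV::'l set). 1 / real CARD('v))"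
    by simp
  ultimately have "(1 / real CARD('v)) ^ CARD('l) * (\<Sum>u\<in>UNIV. qu \<alpha> t x x0 u)
                     = (\<Prod>l\<in>UNIV. 1 / real CARD('v) * (real CARD('v) * a l + (1 - \<alpha> t)))"
    by (simp only: prod.distrib)
  also have "\<dots> = qf \<alpha> t 0 x x0"
    unfolding qf_def assms a_def by (intro prod.cong) (simp_all add: field_simps)
  finally show ?thesis .
qed

lemma qf_from_0_pos:
  assumes "\<alpha> 0 = 1" "0 \<le> \<alpha> t" "\<alpha> t < 1"
  shows "0 < qf \<alpha> t 0 (x::'l::finite \<Rightarrow> 'v::finite) x0"
  unfolding qf_def using assms by (intro prod_pos) (auto intro!: add_nonneg_pos)

lemma qu_nonneg:
  assumes "0 \<le> \<alpha> t" "\<alpha> t \<le> 1"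
  shows "0 \<le> qu \<alpha> t x x0 u"
  unfolding qu_def using assms by (intro prod_nonneg) auto

lemma pt_pos:
  assumes "valid_dist p0" "\<And>x0. 0 < qf \<alpha> s 0 x x0"
  shows "0 < pt p0 \<alpha> s x"
proof -
  have p0_nonneg: "0 \<le> p0 x0" for x0
    using assms(1) by (simp add: valid_dist_def)
  obtain x0 where "p0 x0 \<noteq> 0"
    using assms(1) by (force simp: valid_dist_def)
  then have "0 < p0 x0 * qf \<alpha> s 0 x x0"
    using p0_nonneg[of x0] assms(2)[of x0] by simp
  moreover have "p0 x0 * qf \<alpha> s 0 x x0 \<le> pt p0 \<alpha> s x"
    unfolding pt_def using p0_nonneg less_imp_le[OF assms(2)]
    by (intro member_le_sum) (auto intro!: mult_nonneg_nonneg)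
  ultimately show ?thesis by linarith
qed

lemma pden_mult_rho:
  fixes xt :: "'l::finite \<Rightarrow> 'v::finite"
  assumes "\<And>x. 0 \<le> p0 x" "0 \<le> \<alpha> t" "\<alpha> t \<le> 1"
  shows "pden p0 \<alpha> t x0 xt u * rho p0 \<alpha> t u xt
           = (1 / real CARD('v)) ^ CARD('l) * (p0 x0 * qu \<alpha> t xt x0 u) / pt p0 \<alpha> t xt"
proof (cases "ptu p0 \<alpha> t xt u = 0")
  case True
  then have "p0 x0 * qu \<alpha> t xt x0 u = 0"
    using assms unfolding ptu_def
    by (subst (asm) sum_nonneg_eq_0_iff) (auto intro!: mult_nonneg_nonneg qu_nonneg)
  with True show ?thesis
    unfolding pden_def rho_def by simp
next
  case False
  then show ?thesis
    unfolding pden_def rho_def by (simp add: field_simps)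
qed

lemma sum_pden_mult_rho:
  fixes xt :: "'l::finite \<Rightarrow> 'v::finite"
  assumes "\<And>x. 0 \<le> p0 x" "\<alpha> 0 = 1" "0 \<le> \<alpha> t" "\<alpha> t \<le> 1"
  shows "(\<Sum>u\<in>UNIV. pden p0 \<alpha> t x0 xt u * rho p0 \<alpha> t u xt)
           = p0 x0 * qf \<alpha> t 0 xt x0 / pt p0 \<alpha> t xt"
proof -
  have "(\<Sum>u\<in>UNIV. pden p0 \<alpha> t x0 xt u * rho p0 \<alpha> t u xt)
          = p0 x0 * ((1 / real CARD('v)) ^ CARD('l) * (\<Sum>u\<in>UNIV. qu \<alpha> t xt x0 u)) / pt p0 \<alpha> t xt"
    using assms(1,3,4)
    by (simp add: pden_mult_rho sum_divide_distrib sum_distrib_left mult.left_commute)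
  then show ?thesis
    by (simp only: sum_qu_uniform[of \<alpha>, OF assms(2)])
qed

lemma rres_mult_qbridge:
  fixes xs :: "'l::finite \<Rightarrow> 'v::finite"
  assumes "qf \<alpha> s 0 xs x0 \<noteq> 0" "qf \<alpha> t 0 xt x0 \<noteq> 0"
  shows "rres \<alpha> s us x0 xs * qbridge \<alpha> s t xs x0 xt * qf \<alpha> t 0 xt x0
           = (1 / real CARD('v)) ^ CARD('l) * qu \<alpha> s xs x0 us * qf \<alpha> t s xt xs"
  using assms unfolding rres_def qbridge_def by (simp add: field_simps)

lemma sum_plift_mult_rho:
  fixes xs :: "'l::finite \<Rightarrow> 'v::finite"
  assumes "\<And>x. 0 \<le> p0 x" "\<alpha> 0 = 1" "0 \<le> \<alpha> s" "\<alpha> s < 1" "0 \<le> \<alpha> t" "\<alpha> t < 1"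
  shows "(\<Sum>ut\<in>UNIV. plift p0 \<alpha> s t xs us xt ut * rho p0 \<alpha> t ut xt)
           = qf \<alpha> t s xt xs * (1 / real CARD('v)) ^ CARD('l) * ptu p0 \<alpha> s xs us / pt p0 \<alpha> t xt"
proof -
  have qf_nonzero: "qf \<alpha> s 0 xs x0 \<noteq> 0" "qf \<alpha> t 0 xt x0 \<noteq> 0" for x0
    using assms qf_from_0_pos[of \<alpha> s] qf_from_0_pos[of \<alpha> t] by (metis less_irrefl)+
  have "(\<Sum>ut\<in>UNIV. plift p0 \<alpha> s t xs us xt ut * rho p0 \<alpha> t ut xt)
          = (\<Sum>x0\<in>UNIV. rres \<alpha> s us x0 xs * qbridge \<alpha> s t xs x0 xt
               * (\<Sum>ut\<in>UNIV. pden p0 \<alpha> t x0 xt ut * rho p0 \<alpha> t ut xt))"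
    unfolding plift_def sum_distrib_left sum_distrib_right
    by (subst sum.swap) (simp add: mult.assoc)
  also have "\<dots> = (\<Sum>x0\<in>UNIV. rres \<alpha> s us x0 xs * qbridge \<alpha> s t xs x0 xt * qf \<alpha> t 0 xt x0
                     * p0 x0 / pt p0 \<alpha> t xt)"
    using assms by (simp add: sum_pden_mult_rho, simp add: ac_simps)
  also have "\<dots> = (\<Sum>x0\<in>UNIV. (1 / real CARD('v)) ^ CARD('l) * qu \<alpha> s xs x0 us * qf \<alpha> t s xt xs
                     * p0 x0 / pt p0 \<alpha> t xt)"
    by (intro sum.cong refl) (simp only: rres_mult_qbridge[OF qf_nonzero])
  also have "\<dots> = qf \<alpha> t s xt xs * (1 / real CARD('v)) ^ CARD('l) * ptu p0 \<alpha> s xs us / pt p0 \<alpha> t xt"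
    unfolding ptu_def sum_distrib_left sum_divide_distrib by (simp add: ac_simps)
  finally show ?thesis .
qed

theorem mainTheorem6:
  fixes p0 :: "('l::finite \<Rightarrow> 'v::finite) \<Rightarrow> real"
    and \<alpha> :: "real \<Rightarrow> real"
    and s t :: real
    and xt xs us :: "'l \<Rightarrow> 'v"
  assumes K2: "CARD('v) \<ge> 2"
    and sched: "valid_schedule \<alpha>"
    and dist: "valid_dist p0"
    and st: "0 < s" "s < t" "t \<le> 1"
    and pos: "pt p0 \<alpha> t xt > 0"
  shows "(\<Sum>ut\<in>UNIV. plift p0 \<alpha> s t xs us xt ut * rho p0 \<alpha> t ut xt) =
         (if pt p0 \<alpha> s xs = 0 then 0 else prev p0 \<alpha> s t xs xt * rho p0 \<alpha> s us xs)"
proof -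
  have \<alpha>0: "\<alpha> 0 = 1" and \<alpha>s: "0 < \<alpha> s" "\<alpha> s < 1" and \<alpha>t: "0 < \<alpha> t" "\<alpha> t < 1"
    using sched st unfolding valid_schedule_def by auto
  have p0_nonneg: "0 \<le> p0 x" for x
    using dist by (simp add: valid_dist_def)
  have ps: "0 < pt p0 \<alpha> s xs"
    using pt_pos[OF dist qf_from_0_pos[of \<alpha>, OF \<alpha>0]] \<alpha>s by simp
  have "prev p0 \<alpha> s t xs xt * rho p0 \<alpha> s us xs
          = qf \<alpha> t s xt xs * (1 / real CARD('v)) ^ CARD('l) * ptu p0 \<alpha> s xs us / pt p0 \<alpha> t xt"
    using ps unfolding prev_def rho_def by (simp add: field_simps)
  with ps show ?thesis
    using sum_plift_mult_rho[of p0 \<alpha>, OF p0_nonneg \<alpha>0] \<alpha>s \<alpha>t by simp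
qed

end
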